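(* Let $n\ge 1$ and let $P(z)=z^n+a_{n-2}z^{n-2}+\dots+a_1z+a_0\in\mathbb{C}[z]$ be a normalized polynomial of degree $n$. Then $P\in\overline{\mathbb{Q}}[z]$ if and only if $B_P\subset\overline{\mathbb{Q}}$.
   Context: $\overline{\mathbb{Q}}\subset\mathbb{C}$ denotes the field of algebraic numbers. A critical point of $P$ is a $\zeta\in\mathbb{C}$ with $P'(\zeta)=0$; a critical value is $P(\zeta)$ for a critical point $\zeta$; $B_P$ denotes the (finite) set of critical values of $P$. A polynomial of degree $n$ is called normalized if it is monic and its coefficient of $z^{n-1}$ is $0$. *)

theory Defs
  imports "HOL-Computational_Algebra.Polynomial"
begin

definition critical_values :: "complex poly \<Rightarrow> complex set" where
  "critical_values P = {poly P \<zeta> | \<zeta>. poly (pderiv P) \<zeta> = 0}"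

definition normalized_poly :: "complex poly \<Rightarrow> bool" where
  "normalized_poly P \<longleftrightarrow> lead_coeff P = 1 \<and> coeff P (degree P - 1) = 0"

end

theory Submission
  imports Defs "HOL-Computational_Algebra.Fundamental_Theorem_Algebra"
begin

text \<open>Both directions rest on derivations \<open>D\<close> of subfields \<open>F \<subseteq> \<complex>\<close>. Such a \<open>D\<close> vanishes on algebraic
  numbers, and extending through simple extensions \<open>F(\<alpha>)\<close> one finds, for any transcendental \<open>t\<close>
  and any finite set, a derivation defined on that set with \<open>D t = 1\<close>.

  If the coefficients of \<open>P\<close> are algebraic and \<open>P'(z) = 0\<close>, then \<open>D (P(z)) = P'(z) D z = 0\<close> for all
  such \<open>D\<close>, so \<open>P(z)\<close> is algebraic. Conversely, let \<open>B\<close> be the set of critical values and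
  \<open>R = (\<Prod>w\<in>B. [:-w, 1:])\<close>; then \<open>R(P) = P' H\<close>. If \<open>B\<close> consists of algebraic numbers, applying \<open>D\<close>
  coefficientwise shows that \<open>Q = D(P)\<close> is a first-order deformation of \<open>P\<close> keeping the critical
  values in \<open>B\<close>, and comparing orders of vanishing at the critical points gives \<open>P' dvd Q\<close>. For
  normalized \<open>P\<close> the two leading coefficients are constants, so \<open>deg Q < deg P'\<close>; hence \<open>Q = 0\<close>,
  i.e. every such \<open>D\<close> kills every coefficient of \<open>P\<close>, which are therefore algebraic.\<close>

section \<open>Subfields and polynomials over them\<close>

locale subfield =
  fixes F :: "'a::field_char_0 set"
  assumes zero_mem [simp, intro]: "0 \<in> F"
    and one_mem [simp, intro]: "1 \<in> F"
    and add_mem [intro]: "x \<in> F \<Longrightarrow> y \<in> F \<Longrightarrow> x + y \<in> F"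
    and mult_mem [intro]: "x \<in> F \<Longrightarrow> y \<in> F \<Longrightarrow> x * y \<in> F"
    and uminus_mem [intro]: "x \<in> F \<Longrightarrow> - x \<in> F"
    and inverse_mem [intro]: "x \<in> F \<Longrightarrow> inverse x \<in> F"

definition poly_over :: "'a::zero set \<Rightarrow> 'a poly \<Rightarrow> bool" where
  "poly_over F p \<longleftrightarrow> (\<forall>i. coeff p i \<in> F)"

lemma subfield_Rats: "subfield \<rat>"
  by unfold_locales auto

lemma algebraic_iff_poly_over_Rats: "algebraic x \<longleftrightarrow> (\<exists>p. poly_over \<rat> p \<and> p \<noteq> 0 \<and> poly p x = 0)"
  by (simp add: algebraic_altdef poly_over_def)

context subfield
begin

lemma diff_mem [intro]: "x \<in> F \<Longrightarrow> y \<in> F \<Longrightarrow> x - y \<in> F"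
  using add_mem[of x "- y"] by auto

lemma divide_mem [intro]: "x \<in> F \<Longrightarrow> y \<in> F \<Longrightarrow> x / y \<in> F"
  by (auto simp: divide_inverse)

lemma sum_mem [intro]: "(\<And>i. i \<in> A \<Longrightarrow> f i \<in> F) \<Longrightarrow> sum f A \<in> F"
  by (induction A rule: infinite_finite_induct) auto

lemma of_nat_mem [intro]: "of_nat n \<in> F"
  by (induction n) auto

lemma of_int_mem [intro]: "of_int z \<in> F"
  by (cases z rule: int_cases) (auto simp del: of_nat_Suc)

lemma Rats_subset: "\<rat> \<subseteq> F"
  by (auto elim!: Rats_cases')

lemma poly_over_coeffs: "set (coeffs p) \<subseteq> F \<Longrightarrow> poly_over F p"
  unfolding poly_over_def
  by (metis coeff_0 coeff_in_coeffs le_degree subsetD zero_mem)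

lemma poly_over_pCons_iff [simp]: "poly_over F (pCons a p) \<longleftrightarrow> a \<in> F \<and> poly_over F p"
  unfolding poly_over_def
  by (auto simp: coeff_pCons split: nat.splits dest: spec[of _ 0] spec[of _ "Suc _"])

lemma poly_over_0 [simp, intro]: "poly_over F 0"
  by (simp add: poly_over_def)

lemma poly_over_1 [simp, intro]: "poly_over F 1"
  by (simp add: poly_over_def coeff_1)

lemma poly_over_add [intro]: "poly_over F p \<Longrightarrow> poly_over F q \<Longrightarrow> poly_over F (p + q)"
  by (auto simp: poly_over_def)

lemma poly_over_diff [intro]: "poly_over F p \<Longrightarrow> poly_over F q \<Longrightarrow> poly_over F (p - q)"
  by (auto simp: poly_over_def)

lemma poly_over_mult [intro]: "poly_over F p \<Longrightarrow> poly_over F q \<Longrightarrow> poly_over F (p * q)"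
  by (auto simp: poly_over_def coeff_mult)

lemma poly_over_pderiv [intro]: "poly_over F p \<Longrightarrow> poly_over F (pderiv p)"
  by (auto simp: poly_over_def coeff_pderiv)

lemma poly_over_pcompose [intro]: "poly_over F p \<Longrightarrow> poly_over F q \<Longrightarrow> poly_over F (pcompose p q)"
  by (induction p) (auto simp: pcompose_pCons)

lemma poly_over_prod [intro]: "(\<And>i. i \<in> A \<Longrightarrow> poly_over F (f i)) \<Longrightarrow> poly_over F (prod f A)"
  by (induction A rule: infinite_finite_induct) auto

lemma poly_mem [intro]: "poly_over F p \<Longrightarrow> x \<in> F \<Longrightarrow> poly p x \<in> F"
  by (induction p) auto

end

section \<open>Derivations\<close>

locale derivation = subfield F for F :: "'a::field_char_0 set" +
  fixes D :: "'a \<Rightarrow> 'a"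
  assumes D_add: "x \<in> F \<Longrightarrow> y \<in> F \<Longrightarrow> D (x + y) = D x + D y"
    and D_mult: "x \<in> F \<Longrightarrow> y \<in> F \<Longrightarrow> D (x * y) = x * D y + y * D x"
begin

lemma D_0 [simp]: "D 0 = 0"
  using D_add[of 0 0] by simp

lemma D_1 [simp]: "D 1 = 0"
  using D_mult[of 1 1] by simp

lemma D_uminus: "x \<in> F \<Longrightarrow> D (- x) = - D x"
  using D_add[of x "- x"] by (simp add: eq_neg_iff_add_eq_0 uminus_mem add.commute)

lemma D_diff: "x \<in> F \<Longrightarrow> y \<in> F \<Longrightarrow> D (x - y) = D x - D y"
  using D_add[of x "- y"] D_uminus[of y] by auto

lemma D_inverse: "x \<in> F \<Longrightarrow> D (inverse x) = - D x / x ^ 2"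
proof (cases "x = 0")
  case False
  assume x: "x \<in> F"
  have "x * D (inverse x) + inverse x * D x = 0"
    using D_mult[OF x inverse_mem[OF x]] False by simp
  then show ?thesis
    using False by (simp add: field_simps power2_eq_square) (metis add_eq_0_iff mult.commute)
qed simp

lemma D_sum: "(\<And>i. i \<in> A \<Longrightarrow> f i \<in> F) \<Longrightarrow> D (sum f A) = (\<Sum>i\<in>A. D (f i))"
  by (induction A rule: infinite_finite_induct) (auto simp: D_add sum_mem)

lemma D_of_nat [simp]: "D (of_nat n) = 0"
  by (induction n) (auto simp: D_add[OF one_mem of_nat_mem])

lemma D_of_int [simp]: "D (of_int z) = 0"
  by (cases z rule: int_cases) (simp_all add: D_uminus[OF of_nat_mem] del: of_nat_Suc)

lemma D_Rats: "x \<in> \<rat> \<Longrightarrow> D x = 0"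
  by (auto elim!: Rats_cases' simp: divide_inverse D_mult[OF of_int_mem inverse_mem[OF of_int_mem]]
      D_inverse[OF of_int_mem])

lemma map_D_add:
  "poly_over F p \<Longrightarrow> poly_over F q \<Longrightarrow> map_poly D (p + q) = map_poly D p + map_poly D q"
  by (rule poly_eqI) (simp add: coeff_map_poly D_add poly_over_def)

lemma map_D_diff:
  "poly_over F p \<Longrightarrow> poly_over F q \<Longrightarrow> map_poly D (p - q) = map_poly D p - map_poly D q"
  by (rule poly_eqI) (simp add: coeff_map_poly D_diff poly_over_def)

lemma map_D_mult:
  assumes "poly_over F p" "poly_over F q"
  shows "map_poly D (p * q) = map_poly D p * q + p * map_poly D q"
proof (rule poly_eqI)
  fix n
  have "coeff (map_poly D (p * q)) n = (\<Sum>i\<le>n. D (coeff p i * coeff q (n - i)))"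
    using assms by (auto simp: coeff_map_poly coeff_mult poly_over_def intro!: D_sum)
  also have "\<dots> = (\<Sum>i\<le>n. D (coeff p i) * coeff q (n - i)) + (\<Sum>i\<le>n. coeff p i * D (coeff q (n - i)))"
    using assms by (simp add: D_mult poly_over_def sum.distrib algebra_simps)
  also have "\<dots> = coeff (map_poly D p * q + p * map_poly D q) n"
    by (simp add: coeff_mult coeff_map_poly)
  finally show "coeff (map_poly D (p * q)) n = coeff (map_poly D p * q + p * map_poly D q) n" .
qed

lemma map_D_pderiv: "poly_over F p \<Longrightarrow> map_poly D (pderiv p) = pderiv (map_poly D p)"
  by (rule poly_eqI)
     (simp add: coeff_map_poly coeff_pderiv D_mult[OF of_nat_mem] poly_over_def del: of_nat_Suc)

lemma map_D_pcompose:
  assumes "poly_over F r" "poly_over F p"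
  shows "map_poly D (pcompose r p) = pcompose (pderiv r) p * map_poly D p + pcompose (map_poly D r) p"
  using assms
proof (induction r)
  case (pCons a r)
  then have "map_poly D (pcompose (pCons a r) p)
      = [:D a:] + (map_poly D p * pcompose r p + p * map_poly D (pcompose r p))"
    by (simp add: pcompose_pCons map_D_add map_D_mult map_poly_pCons poly_over_mult poly_over_pcompose)
  with pCons show ?case
    by (simp add: pderiv_pCons pcompose_pCons pcompose_add map_poly_pCons algebra_simps)
qed simp

lemma D_poly:
  "poly_over F p \<Longrightarrow> x \<in> F \<Longrightarrow> D (poly p x) = poly (map_poly D p) x + poly (pderiv p) x * D x"
  by (induction p) (auto simp: D_add D_mult mult_mem poly_mem pderiv_pCons map_poly_pCons algebra_simps)

lemma map_D_prod_eq_0: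
  "(\<And>i. i \<in> A \<Longrightarrow> poly_over F (f i)) \<Longrightarrow> (\<And>i. i \<in> A \<Longrightarrow> map_poly D (f i) = 0)
    \<Longrightarrow> map_poly D (prod f A) = 0"
  by (induction A rule: infinite_finite_induct) (auto simp: map_D_mult poly_over_prod one_pCons map_poly_pCons)

end

context subfield
begin

lemma poly_over_div_mod:
  assumes "poly_over F p" "poly_over F m" "m \<noteq> 0"
  shows "\<exists>q r. poly_over F q \<and> poly_over F r \<and> p = q * m + r \<and> (r = 0 \<or> degree r < degree m)"
  using assms(1)
proof (induction "degree p" arbitrary: p rule: less_induct)
  case less
  show ?case
  proof (cases "p \<noteq> 0 \<and> degree m \<le> degree p")
    case False
    with less.prems show ?thesis by (intro exI[of _ 0] exI[of _ p]) auto
  next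
    case True
    define s where "s = monom (lead_coeff p / lead_coeff m) (degree p - degree m)"
    have s: "poly_over F s"
      using less.prems assms(2) by (auto simp: s_def poly_over_def)
    have "degree (s * m) \<le> degree p"
      using True degree_mult_le[of s m] degree_monom_le[of "lead_coeff p / lead_coeff m" "degree p - degree m"]
      unfolding s_def by arith
    moreover have "coeff (s * m) (degree p) = lead_coeff p"
      using True assms(3) by (simp add: s_def coeff_monom_mult)
    ultimately have smaller: "degree (p - s * m) < degree p" if "p - s * m \<noteq> 0"
      using that by (intro degree_less_if_less_eqI) (auto intro: degree_diff_le)
    have "\<exists>q r. poly_over F q \<and> poly_over F r \<and> p - s * m = q * m + r \<and> (r = 0 \<or> degree r < degree m)"
    proof (cases "p - s * m = 0")
      case True
      then show ?thesis by (intro exI[of _ 0]) auto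
    next
      case False
      with less s assms(2) show ?thesis by (intro less.hyps smaller) auto
    qed
    then obtain q r where "poly_over F q" "poly_over F r" "p - s * m = q * m + r"
      and "r = 0 \<or> degree r < degree m" by blast
    with s show ?thesis
      by (intro exI[of _ "q + s"] exI[of _ r]) (auto simp: algebra_simps)
  qed
qed

lemma ex_minimal_poly:
  assumes "poly_over F p" "p \<noteq> 0" "poly p \<alpha> = 0"
  obtains m where "poly_over F m" "poly m \<alpha> = 0" "poly (pderiv m) \<alpha> \<noteq> 0"
    and "\<And>p. poly_over F p \<Longrightarrow> poly p \<alpha> = 0 \<Longrightarrow> \<exists>q. poly_over F q \<and> p = q * m"
proof -
  obtain m where m: "poly_over F m" "m \<noteq> 0" "poly m \<alpha> = 0"
    and least: "\<And>q. poly_over F q \<Longrightarrow> q \<noteq> 0 \<Longrightarrow> poly q \<alpha> = 0 \<Longrightarrow> degree m \<le> degree q"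
    using ex_has_least_nat[of "\<lambda>p. poly_over F p \<and> p \<noteq> 0 \<and> poly p \<alpha> = 0" p degree] assms
    by blast
  have "\<exists>q. poly_over F q \<and> p = q * m" if p: "poly_over F p" "poly p \<alpha> = 0" for p
  proof -
    obtain q r where qr: "poly_over F q" "poly_over F r" "p = q * m + r" "r = 0 \<or> degree r < degree m"
      using poly_over_div_mod[OF p(1) m(1,2)] by blast
    then have "poly r \<alpha> = 0"
      using p(2) m(3) by simp
    with qr(2,4) least[of r] have "r = 0" by fastforce
    with qr(1,3) show ?thesis by auto
  qed
  moreover have "poly (pderiv m) \<alpha> \<noteq> 0"
  proof
    assume "poly (pderiv m) \<alpha> = 0"
    moreover have "degree m \<noteq> 0"
    proof
      assume "degree m = 0"
      then obtain c where "m = [:c:]" by (rule degree_eq_zeroE)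
      with m(2,3) show False by simp
    qed
    ultimately show False
      using least[of "pderiv m"] poly_over_pderiv[OF m(1)] by (auto simp: pderiv_eq_0_iff degree_pderiv)
  qed
  ultimately show thesis
    using m(1,3) that by blast
qed

end

context derivation
begin

lemma D_algebraic:
  assumes "x \<in> F" "algebraic x"
  shows "D x = 0"
proof -
  obtain p where "poly_over \<rat> p" "p \<noteq> 0" "poly p x = 0"
    using assms(2) algebraic_iff_poly_over_Rats by blast
  then obtain m where m: "poly_over \<rat> m" "poly m x = 0" "poly (pderiv m) x \<noteq> 0"
    using subfield.ex_minimal_poly[OF subfield_Rats] by metis
  have "poly_over F m"
    using m(1) Rats_subset by (auto simp: poly_over_def)
  moreover have "map_poly D m = 0"
    using m(1) by (intro poly_eqI) (simp add: coeff_map_poly poly_over_def D_Rats)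
  ultimately have "D (poly m x) = poly (pderiv m) x * D x"
    using D_poly assms(1) by simp
  with m show ?thesis by simp
qed

end

section \<open>Extending derivations\<close>

definition adjoin :: "'a::field set \<Rightarrow> 'a \<Rightarrow> 'a set" where
  "adjoin F \<alpha> = {poly p \<alpha> / poly q \<alpha> | p q. poly_over F p \<and> poly_over F q \<and> poly q \<alpha> \<noteq> 0}"

context subfield
begin

lemma adjoinI: "poly_over F p \<Longrightarrow> poly_over F q \<Longrightarrow> poly q \<alpha> \<noteq> 0 \<Longrightarrow> poly p \<alpha> / poly q \<alpha> \<in> adjoin F \<alpha>"
  unfolding adjoin_def by blast

lemma subset_adjoin: "F \<subseteq> adjoin F \<alpha>"
  using adjoinI[of "[:c:]" 1 \<alpha> for c] by (auto simp: one_pCons)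

lemma mem_adjoin: "\<alpha> \<in> adjoin F \<alpha>"
  using adjoinI[of "[:0, 1:]" 1 \<alpha>] by (simp add: one_pCons)

lemma subfield_adjoin: "subfield (adjoin F \<alpha>)"
proof
  show "0 \<in> adjoin F \<alpha>" "1 \<in> adjoin F \<alpha>"
    using subset_adjoin by auto
next
  fix x y assume "x \<in> adjoin F \<alpha>" "y \<in> adjoin F \<alpha>"
  then obtain p1 q1 p2 q2 where pq: "poly_over F p1" "poly_over F q1" "poly_over F p2" "poly_over F q2"
    and nz: "poly q1 \<alpha> \<noteq> 0" "poly q2 \<alpha> \<noteq> 0"
    and xy: "x = poly p1 \<alpha> / poly q1 \<alpha>" "y = poly p2 \<alpha> / poly q2 \<alpha>"
    unfolding adjoin_def by blast
  have "x + y = poly (p1 * q2 + p2 * q1) \<alpha> / poly (q1 * q2) \<alpha>"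
    using nz by (simp add: xy field_simps)
  then show "x + y \<in> adjoin F \<alpha>"
    using pq nz adjoinI[of "p1 * q2 + p2 * q1" "q1 * q2"] by auto
  have "x * y = poly (p1 * p2) \<alpha> / poly (q1 * q2) \<alpha>"
    by (simp add: xy)
  then show "x * y \<in> adjoin F \<alpha>"
    using pq nz adjoinI[of "p1 * p2" "q1 * q2"] by auto
next
  fix x assume "x \<in> adjoin F \<alpha>"
  then obtain p q where pq: "poly_over F p" "poly_over F q" "poly q \<alpha> \<noteq> 0"
    and x: "x = poly p \<alpha> / poly q \<alpha>"
    unfolding adjoin_def by blast
  have "- x = poly (- p) \<alpha> / poly q \<alpha>"
    by (simp add: x)
  then show "- x \<in> adjoin F \<alpha>"
    using pq poly_over_diff[OF poly_over_0 pq(1)] adjoinI[of "- p" q] by auto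
  show "inverse x \<in> adjoin F \<alpha>"
  proof (cases "poly p \<alpha> = 0")
    case True
    then show ?thesis using subset_adjoin by (auto simp: x)
  next
    case False
    then show ?thesis using pq adjoinI[of q p] by (simp add: x)
  qed
qed

end

context derivation
begin

text \<open>The value that a derivation extending \<open>D\<close> with \<open>\<alpha> \<mapsto> \<delta>\<close> must take at \<open>p(\<alpha>)\<close>.\<close>
definition D_eval :: "'a \<Rightarrow> 'a \<Rightarrow> 'a poly \<Rightarrow> 'a" where
  "D_eval \<alpha> \<delta> p = poly (map_poly D p) \<alpha> + poly (pderiv p) \<alpha> * \<delta>"

lemma D_eval_add:
  "poly_over F p \<Longrightarrow> poly_over F q \<Longrightarrow> D_eval \<alpha> \<delta> (p + q) = D_eval \<alpha> \<delta> p + D_eval \<alpha> \<delta> q"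
  by (simp add: D_eval_def map_D_add pderiv_add algebra_simps)

lemma D_eval_diff:
  "poly_over F p \<Longrightarrow> poly_over F q \<Longrightarrow> D_eval \<alpha> \<delta> (p - q) = D_eval \<alpha> \<delta> p - D_eval \<alpha> \<delta> q"
  by (simp add: D_eval_def map_D_diff pderiv_diff algebra_simps)

lemma D_eval_mult:
  "poly_over F p \<Longrightarrow> poly_over F q \<Longrightarrow>
    D_eval \<alpha> \<delta> (p * q) = D_eval \<alpha> \<delta> p * poly q \<alpha> + poly p \<alpha> * D_eval \<alpha> \<delta> q"
  by (simp add: D_eval_def map_D_mult pderiv_mult algebra_simps)

lemma D_eval_const [simp]: "D_eval \<alpha> \<delta> [:c:] = D c"
  by (simp add: D_eval_def map_poly_pCons)

lemma D_eval_X [simp]: "D_eval \<alpha> \<delta> [:0, 1:] = \<delta>"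
  by (simp add: D_eval_def map_poly_pCons pderiv_pCons)

end

locale derivation_extension = derivation +
  fixes \<alpha> \<delta> :: 'a
  assumes D_eval_root: "poly_over F p \<Longrightarrow> poly p \<alpha> = 0 \<Longrightarrow> D_eval \<alpha> \<delta> p = 0"
begin

definition D_quotient :: "'a poly \<Rightarrow> 'a poly \<Rightarrow> 'a" where
  "D_quotient p q = (D_eval \<alpha> \<delta> p * poly q \<alpha> - poly p \<alpha> * D_eval \<alpha> \<delta> q) / (poly q \<alpha>)\<^sup>2"

lemma D_quotient_cong:
  assumes pq: "poly_over F p1" "poly_over F q1" "poly_over F p2" "poly_over F q2"
    and nz: "poly q1 \<alpha> \<noteq> 0" "poly q2 \<alpha> \<noteq> 0"
    and eq: "poly p1 \<alpha> / poly q1 \<alpha> = poly p2 \<alpha> / poly q2 \<alpha>"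
  shows "D_quotient p1 q1 = D_quotient p2 q2"
proof -
  have root: "poly (p1 * q2 - p2 * q1) \<alpha> = 0"
    using eq nz by (simp add: field_simps)
  have "D_eval \<alpha> \<delta> (p1 * q2 - p2 * q1) = 0"
    using pq by (intro D_eval_root root) auto
  then have "D_eval \<alpha> \<delta> p1 * poly q2 \<alpha> + poly p1 \<alpha> * D_eval \<alpha> \<delta> q2
      = D_eval \<alpha> \<delta> p2 * poly q1 \<alpha> + poly p2 \<alpha> * D_eval \<alpha> \<delta> q1"
    using pq by (simp add: D_eval_diff D_eval_mult poly_over_mult)
  moreover have "poly p1 \<alpha> = poly p2 \<alpha> * poly q1 \<alpha> / poly q2 \<alpha>"
    using eq nz by (simp add: field_simps)
  ultimately show ?thesis
    using nz unfolding D_quotient_def by (simp add: field_simps power2_eq_square) algebra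
qed

definition D_ext :: "'a \<Rightarrow> 'a" where
  "D_ext x = (SOME d. \<exists>p q. poly_over F p \<and> poly_over F q \<and> poly q \<alpha> \<noteq> 0
      \<and> x = poly p \<alpha> / poly q \<alpha> \<and> d = D_quotient p q)"

lemma D_ext_quotient:
  assumes "poly_over F p" "poly_over F q" "poly q \<alpha> \<noteq> 0"
  shows "D_ext (poly p \<alpha> / poly q \<alpha>) = D_quotient p q"
  unfolding D_ext_def
proof (rule someI2)
  show "\<exists>p' q'. poly_over F p' \<and> poly_over F q' \<and> poly q' \<alpha> \<noteq> 0
      \<and> poly p \<alpha> / poly q \<alpha> = poly p' \<alpha> / poly q' \<alpha> \<and> D_quotient p q = D_quotient p' q'"
    using assms by blast
next
  fix d assume "\<exists>p' q'. poly_over F p' \<and> poly_over F q' \<and> poly q' \<alpha> \<noteq> 0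
      \<and> poly p \<alpha> / poly q \<alpha> = poly p' \<alpha> / poly q' \<alpha> \<and> d = D_quotient p' q'"
  then show "d = D_quotient p q"
    using D_quotient_cong[OF _ _ assms(1,2) _ assms(3)] by metis
qed

lemma D_ext_extends: "x \<in> F \<Longrightarrow> D_ext x = D x"
  using D_ext_quotient[of "[:x:]" 1] by (simp add: D_quotient_def one_pCons)

lemma D_ext_generator: "D_ext \<alpha> = \<delta>"
  using D_ext_quotient[of "[:0, 1:]" 1] by (simp add: D_quotient_def one_pCons)

lemma derivation_D_ext: "derivation (adjoin F \<alpha>) D_ext"
proof (intro derivation.intro derivation_axioms.intro subfield_adjoin)
  fix x y assume "x \<in> adjoin F \<alpha>" "y \<in> adjoin F \<alpha>"
  then obtain p1 q1 p2 q2 where pq: "poly_over F p1" "poly_over F q1" "poly_over F p2" "poly_over F q2"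
    and nz: "poly q1 \<alpha> \<noteq> 0" "poly q2 \<alpha> \<noteq> 0"
    and xy: "x = poly p1 \<alpha> / poly q1 \<alpha>" "y = poly p2 \<alpha> / poly q2 \<alpha>"
    unfolding adjoin_def by blast
  have Dxy: "D_ext x = D_quotient p1 q1" "D_ext y = D_quotient p2 q2"
    using pq nz by (simp_all add: xy D_ext_quotient)
  have "x + y = poly (p1 * q2 + p2 * q1) \<alpha> / poly (q1 * q2) \<alpha>"
    using nz by (simp add: xy field_simps)
  then have "D_ext (x + y) = D_quotient (p1 * q2 + p2 * q1) (q1 * q2)"
    using pq nz D_ext_quotient[of "p1 * q2 + p2 * q1" "q1 * q2"] by (simp add: poly_over_add poly_over_mult)
  also have "\<dots> = D_ext x + D_ext y"
    using pq nz unfolding Dxy D_quotient_def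
    by (simp add: D_eval_add D_eval_mult poly_over_mult field_simps power2_eq_square)
  finally show "D_ext (x + y) = D_ext x + D_ext y" .
  have "D_ext (x * y) = D_quotient (p1 * p2) (q1 * q2)"
    using pq nz D_ext_quotient[of "p1 * p2" "q1 * q2"] by (simp add: xy poly_over_mult)
  also have "\<dots> = x * D_ext y + y * D_ext x"
    using pq nz unfolding Dxy D_quotient_def
    by (simp add: xy D_eval_mult field_simps power2_eq_square)
  finally show "D_ext (x * y) = x * D_ext y + y * D_ext x" .
qed

end

context derivation
begin

lemma ex_extension_with_value:
  assumes "\<And>p. poly_over F p \<Longrightarrow> poly p \<alpha> = 0 \<Longrightarrow> D_eval \<alpha> \<delta> p = 0"
  shows "\<exists>F' D'. derivation F' D' \<and> F \<subseteq> F' \<and> \<alpha> \<in> F' \<and> (\<forall>x\<in>F. D' x = D x) \<and> D' \<alpha> = \<delta>"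
proof -
  interpret derivation_extension F D \<alpha> \<delta>
    using assms by unfold_locales
  show ?thesis
    using derivation_D_ext subset_adjoin mem_adjoin D_ext_extends D_ext_generator by blast
qed

lemma ex_extension:
  "\<exists>F' D'. derivation F' D' \<and> F \<subseteq> F' \<and> \<alpha> \<in> F' \<and> (\<forall>x\<in>F. D' x = D x)"
proof (cases "\<exists>p. poly_over F p \<and> p \<noteq> 0 \<and> poly p \<alpha> = 0")
  case True
  then obtain m where m: "poly_over F m" "poly m \<alpha> = 0" "poly (pderiv m) \<alpha> \<noteq> 0"
    and dvd: "\<And>p. poly_over F p \<Longrightarrow> poly p \<alpha> = 0 \<Longrightarrow> \<exists>q. poly_over F q \<and> p = q * m"
    using ex_minimal_poly by blast
  define \<delta> where "\<delta> = - poly (map_poly D m) \<alpha> / poly (pderiv m) \<alpha>"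
    \<comment> \<open>forced by \<open>D (m(\<alpha>)) = 0\<close>; every other relation of \<open>\<alpha>\<close> over \<open>F\<close> is a multiple of \<open>m\<close>\<close>
  have "D_eval \<alpha> \<delta> m = 0"
    using m(3) by (simp add: D_eval_def \<delta>_def)
  then have "D_eval \<alpha> \<delta> p = 0" if p: "poly_over F p" "poly p \<alpha> = 0" for p
  proof -
    obtain q where "poly_over F q" "p = q * m"
      using dvd[OF p] by blast
    with m(1,2) \<open>D_eval \<alpha> \<delta> m = 0\<close> show ?thesis
      by (simp add: D_eval_mult)
  qed
  from ex_extension_with_value[OF this] show ?thesis
    by blast
next
  case False
  then have "D_eval \<alpha> 0 p = 0" if "poly_over F p" "poly p \<alpha> = 0" for p
    using that by (auto simp: D_eval_def)
  from ex_extension_with_value[OF this] show ?thesis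
    by blast
qed

lemma ex_extension_finite:
  assumes "finite S"
  shows "\<exists>F' D'. derivation F' D' \<and> F \<subseteq> F' \<and> S \<subseteq> F' \<and> (\<forall>x\<in>F. D' x = D x)"
  using assms
proof (induction S rule: finite_induct)
  case empty
  show ?case
    using derivation_axioms by blast
next
  case (insert \<alpha> S)
  then obtain F1 D1 where 1: "derivation F1 D1" "F \<subseteq> F1" "S \<subseteq> F1" "\<forall>x\<in>F. D1 x = D x"
    by blast
  obtain F2 D2 where 2: "derivation F2 D2" "F1 \<subseteq> F2" "\<alpha> \<in> F2" "\<forall>x\<in>F1. D2 x = D1 x"
    using derivation.ex_extension[OF 1(1)] by blast
  from 1 2 show ?case
    by (intro exI[of _ F2] exI[of _ D2]) (auto simp: subset_iff)
qed

end

lemma ex_derivation_transcendental: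
  fixes t :: "'a::field_char_0"
  assumes "\<not> algebraic t" "finite S"
  shows "\<exists>F D. derivation F D \<and> t \<in> F \<and> S \<subseteq> F \<and> D t = 1"
proof -
  have zero: "derivation \<rat> (\<lambda>_. 0 :: 'a)"
    by (rule derivation.intro[OF subfield_Rats]) (simp add: derivation_axioms_def)
  have "derivation.D_eval (\<lambda>_. 0) t 1 p = 0" if "poly_over \<rat> p" "poly p t = 0" for p
  proof -
    have "p = 0"
      using that assms(1) algebraic_iff_poly_over_Rats by blast
    then show ?thesis
      by (simp add: derivation.D_eval_def[OF zero])
  qed
  then obtain F1 D1 where 1: "derivation F1 D1" "t \<in> F1" "D1 t = 1"
    using derivation.ex_extension_with_value[OF zero] by metis
  obtain F2 D2 where "derivation F2 D2" "F1 \<subseteq> F2" "S \<subseteq> F2" "\<forall>x\<in>F1. D2 x = D1 x"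
    using derivation.ex_extension_finite[OF 1(1) assms(2)] by blast
  with 1 show ?thesis
    by (intro exI[of _ F2] exI[of _ D2]) auto
qed

section \<open>Deformations preserving the critical values\<close>

lemma dvd_if_order_le:
  fixes p q :: "complex poly"
  assumes "p \<noteq> 0" "q \<noteq> 0" and order_le: "\<And>z. poly p z = 0 \<Longrightarrow> order z p \<le> order z q"
  shows "p dvd q"
proof -
  have roots: "{z. poly p z = 0} \<subseteq> {z. poly q z = 0}"
  proof (intro subsetI, unfold mem_Collect_eq)
    fix z assume "poly p z = 0"
    then have "0 < order z p"
      using assms(1) by (simp add: order_gt_0_iff)
    with order_le[OF \<open>poly p z = 0\<close>] show "poly q z = 0"
      using assms(2) order_gt_0_iff by fastforce
  qed
  have "(\<Prod>z | poly p z = 0. [:-z, 1:] ^ order z p) dvd (\<Prod>z | poly p z = 0. [:-z, 1:] ^ order z q)"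
    using order_le by (intro prod_dvd_prod le_imp_power_dvd) auto
  also have "\<dots> dvd (\<Prod>z | poly q z = 0. [:-z, 1:] ^ order z q)"
    using roots poly_roots_finite[OF assms(2)] by (rule prod_dvd_prod_subset[rotated])
  finally show ?thesis
    using assms(1,2)
    by (subst complex_poly_decompose[symmetric, of p], subst complex_poly_decompose[symmetric, of q])
       (simp add: smult_dvd dvd_smult)
qed

lemma linear_factor_mult_pderiv_power:
  fixes z :: "'a::idom"
  shows "[:-z, 1:] * pderiv ([:-z, 1:] ^ n) = smult (of_nat n) ([:-z, 1:] ^ n)"
proof (cases n)
  case (Suc k)
  have "pderiv [:-z, 1:] = 1"
    by (simp add: pderiv_pCons)
  then have "pderiv ([:-z, 1:] ^ Suc k) = smult (of_nat (Suc k)) ([:-z, 1:] ^ k)"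
    by (simp only: pderiv_power_Suc mult_1_right)
  with Suc show ?thesis
    by (simp only: mult_smult_right power_Suc)
qed simp

lemma linear_factor_mult_wronskian:
  fixes z :: "'a::idom" and B Q :: "'a poly"
  defines "u \<equiv> [:-z, 1:]"
  shows "u * (pderiv (u ^ k * B) * (u ^ j * Q) - pderiv (u ^ j * Q) * (u ^ k * B))
    = u ^ (j + k) * (smult (of_nat k - of_nat j) (Q * B) + u * (pderiv B * Q - pderiv Q * B))"
proof -
  have "u * (pderiv (u ^ k * B) * (u ^ j * Q) - pderiv (u ^ j * Q) * (u ^ k * B))
      = (u * pderiv (u ^ k)) * B * u ^ j * Q + u * u ^ k * pderiv B * u ^ j * Q
        - ((u * pderiv (u ^ j)) * Q * u ^ k * B + u * u ^ j * pderiv Q * u ^ k * B)"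
    by (simp add: pderiv_mult algebra_simps)
  also have "\<dots> = u ^ (j + k) * (smult (of_nat k - of_nat j) (Q * B) + u * (pderiv B * Q - pderiv Q * B))"
    unfolding u_def linear_factor_mult_pderiv_power by (simp add: algebra_simps power_add smult_diff_left)
  finally show ?thesis .
qed

lemma order_le_of_wronskian:
  fixes B Q :: "'a::field_char_0 poly"
  assumes "B \<noteq> 0" "Q \<noteq> 0" "order z B = Suc m"
    and "[:-z, 1:] ^ (2 * m) dvd pderiv B * Q - pderiv Q * B"
  shows "m \<le> order z Q"
proof (rule ccontr)
  assume "\<not> m \<le> order z Q"
  define u where "u = [:-z, 1:]"
  define j where "j = order z Q"
  obtain Q1 where Q1: "Q = u ^ j * Q1" "\<not> u dvd Q1"
    using order_decomp[OF assms(2)] unfolding u_def j_def by blast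
  obtain B1 where B1: "B = u ^ Suc m * B1" "\<not> u dvd B1"
    using order_decomp[OF assms(1)] assms(3) unfolding u_def by metis
  define Z where "Z = smult (of_nat (Suc m) - of_nat j) (Q1 * B1) + u * (pderiv B1 * Q1 - pderiv Q1 * B1)"
  have factor: "u * (pderiv B * Q - pderiv Q * B) = u ^ (j + Suc m) * Z"
    unfolding Q1(1) B1(1) Z_def u_def by (rule linear_factor_mult_wronskian)
  have "(of_nat (Suc m) :: 'a) \<noteq> of_nat j"
    using \<open>\<not> m \<le> order z Q\<close> by (simp only: of_nat_eq_iff j_def)
  then have "poly Z z \<noteq> 0"
    using Q1(2) B1(2) by (simp add: Z_def u_def poly_eq_0_iff_dvd)
  moreover have "u \<noteq> 0"
    by (simp add: u_def)
  ultimately have "u ^ (j + Suc m) * Z \<noteq> 0"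
    by auto
  have "u ^ Suc (2 * m) dvd u * (pderiv B * Q - pderiv Q * B)"
    using mult_dvd_mono[OF dvd_refl assms(4)[folded u_def]] by (simp only: power_Suc)
  then have "Suc (2 * m) \<le> order z (u ^ (j + Suc m) * Z)"
    using \<open>u ^ (j + Suc m) * Z \<noteq> 0\<close> unfolding factor order_divides[of z, folded u_def] by simp
  also have "\<dots> = order z (u ^ (j + Suc m)) + order z Z"
    using \<open>u ^ (j + Suc m) * Z \<noteq> 0\<close> by (rule order_mult)
  also have "\<dots> = j + Suc m"
    unfolding u_def order_power_n_n order_0I[OF \<open>poly Z z \<noteq> 0\<close>] by simp
  finally show False
    using \<open>\<not> m \<le> order z Q\<close> by (simp add: j_def)
qed

definition vanishing_poly :: "'a::comm_ring_1 set \<Rightarrow> 'a poly" where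
  "vanishing_poly B = (\<Prod>w\<in>B. [:-w, 1:])"

lemma order_pcompose_vanishing_poly:
  fixes P :: "'a::field_char_0 poly"
  assumes "finite B" "poly P z \<in> B" "pderiv P \<noteq> 0"
  shows "order z (pcompose (vanishing_poly B) P) = Suc (order z (pderiv P))"
proof -
  define w where "w = poly P z"
  define S where "S = pcompose (vanishing_poly (B - {w})) P"
  have "vanishing_poly B = [:-w, 1:] * vanishing_poly (B - {w})"
    using assms(1,2) by (simp add: vanishing_poly_def prod.remove w_def)
  moreover have "pcompose [:-w, 1:] P = P - [:w:]"
    by (simp add: pcompose_pCons)
  ultimately have split: "pcompose (vanishing_poly B) P = (P - [:w:]) * S"
    by (simp only: S_def pcompose_mult)
  have "P - [:w:] \<noteq> 0"
    using assms(3) by (auto simp: pderiv_diff)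
  then have "order z (P - [:w:]) = Suc (order z (pderiv P))"
    using order_pderiv[of "P - [:w:]" z] by (simp add: w_def pderiv_diff)
  moreover have "poly S z \<noteq> 0"
    using assms(1) by (simp add: S_def vanishing_poly_def poly_pcompose poly_prod w_def)
  moreover have "S \<noteq> 0"
    using \<open>poly S z \<noteq> 0\<close> by auto
  ultimately show ?thesis
    using \<open>P - [:w:] \<noteq> 0\<close> by (simp add: split order_mult order_0I)
qed

lemma pcompose_vanishing_poly_nonzero:
  fixes P :: "'a::idom poly"
  assumes "finite B" "degree P > 0"
  shows "pcompose (vanishing_poly B) P \<noteq> 0"
proof -
  have "vanishing_poly B \<noteq> 0"
    using assms(1) by (simp add: vanishing_poly_def)
  then show ?thesis
    using assms(2) pcompose_eq_0 by blast
qed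

lemma pderiv_dvd_pcompose_vanishing_poly:
  fixes P :: "complex poly"
  assumes "finite B" "degree P > 0" "\<And>z. poly (pderiv P) z = 0 \<Longrightarrow> poly P z \<in> B"
  shows "pderiv P dvd pcompose (vanishing_poly B) P"
proof (rule dvd_if_order_le)
  show "pderiv P \<noteq> 0"
    using assms(2) by (simp add: pderiv_eq_0_iff)
  show "pcompose (vanishing_poly B) P \<noteq> 0"
    using assms(1,2) by (rule pcompose_vanishing_poly_nonzero)
  show "order z (pderiv P) \<le> order z (pcompose (vanishing_poly B) P)" if "poly (pderiv P) z = 0" for z
    using order_pcompose_vanishing_poly[OF assms(1) assms(3)[OF that] \<open>pderiv P \<noteq> 0\<close>] by simp
qed

text \<open>\<open>Q\<close> is a first-order deformation \<open>P + \<epsilon> Q\<close> whose critical values stay in \<open>B\<close>: the identity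
  \<open>R(P) = P' H\<close> persists modulo \<open>\<epsilon>\<^sup>2\<close> with \<open>H + \<epsilon> G\<close>.\<close>
lemma pderiv_dvd_deformation:
  fixes P Q G H :: "complex poly"
  assumes "finite B" "degree P > 0" "\<And>z. poly (pderiv P) z = 0 \<Longrightarrow> poly P z \<in> B"
    and H: "pcompose (vanishing_poly B) P = pderiv P * H"
    and G: "pcompose (pderiv (vanishing_poly B)) P * Q = pderiv Q * H + pderiv P * G"
  shows "pderiv P dvd Q"
proof (cases "Q = 0")
  case False
  define R where "R = pcompose (vanishing_poly B) P"
  have "pderiv R * Q = pderiv P * (pcompose (pderiv (vanishing_poly B)) P * Q)"
    by (simp add: R_def pderiv_pcompose algebra_simps)
  also have "\<dots> = pderiv P * (pderiv Q * H + pderiv P * G)"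
    by (simp only: G)
  also have "\<dots> = pderiv Q * R + (pderiv P)\<^sup>2 * G"
    by (simp add: H R_def algebra_simps power2_eq_square)
  finally have wronskian: "pderiv R * Q - pderiv Q * R = (pderiv P)\<^sup>2 * G"
    by simp
  have P': "pderiv P \<noteq> 0"
    using assms(2) by (simp add: pderiv_eq_0_iff)
  show ?thesis
  proof (rule dvd_if_order_le[OF P' False])
    fix z assume z: "poly (pderiv P) z = 0"
    have "[:-z, 1:] ^ (2 * order z (pderiv P)) dvd (pderiv P)\<^sup>2"
      using dvd_power_same[OF order_1, of z "pderiv P" 2] by (simp add: power_mult[symmetric] mult.commute)
    then have "[:-z, 1:] ^ (2 * order z (pderiv P)) dvd pderiv R * Q - pderiv Q * R"
      unfolding wronskian by (rule dvd_mult2)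
    moreover have "R \<noteq> 0"
      unfolding R_def using assms(1,2) by (rule pcompose_vanishing_poly_nonzero)
    ultimately show "order z (pderiv P) \<le> order z Q"
      using order_le_of_wronskian[OF _ False] order_pcompose_vanishing_poly[OF assms(1) assms(3)[OF z] P']
      by (simp add: R_def)
  qed
qed simp

context subfield
begin

lemma poly_over_vanishing_poly: "B \<subseteq> F \<Longrightarrow> poly_over F (vanishing_poly B)"
  unfolding vanishing_poly_def by (intro poly_over_prod) auto

end

context derivation
begin

lemma map_D_vanishing_poly:
  "B \<subseteq> F \<Longrightarrow> (\<And>w. w \<in> B \<Longrightarrow> D w = 0) \<Longrightarrow> map_poly D (vanishing_poly B) = 0"
  unfolding vanishing_poly_def
  by (rule map_D_prod_eq_0) (auto simp: map_poly_pCons D_uminus)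

lemma map_D_deformation:
  assumes "poly_over F P" "poly_over F H" "poly_over F R" "map_poly D R = 0"
    and "pcompose R P = pderiv P * H"
  shows "pcompose (pderiv R) P * map_poly D P = pderiv (map_poly D P) * H + pderiv P * map_poly D H"
proof -
  have "map_poly D (pcompose R P) = pcompose (pderiv R) P * map_poly D P"
    using map_D_pcompose assms(1,3,4) by simp
  moreover have "map_poly D (pderiv P * H) = pderiv (map_poly D P) * H + pderiv P * map_poly D H"
    using assms(1,2) by (simp add: map_D_mult map_D_pderiv poly_over_pderiv)
  ultimately show ?thesis
    using assms(5) by simp
qed

end

section \<open>Algebraicity of coefficients and of critical values\<close>

lemma finite_critical_values:
  assumes "pderiv P \<noteq> 0"
  shows "finite (critical_values P)"
proof -
  have "critical_values P = poly P ` {z. poly (pderiv P) z = 0}"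
    by (auto simp: critical_values_def)
  with poly_roots_finite[OF assms] show ?thesis
    by simp
qed

lemma (in derivation) coeff_map_D_high_eq_0:
  assumes "lead_coeff P = 1" "coeff P (degree P - 1) = 0" "degree P - 1 \<le> j"
  shows "coeff (map_poly D P) j = 0"
proof -
  from assms(3) consider "j = degree P - 1" | "j = degree P" | "j > degree P"
    by linarith
  then have "coeff P j \<in> {0, 1}"
    using assms(1,2) by cases (auto simp: coeff_eq_0)
  then show ?thesis
    by (auto simp: coeff_map_poly)
qed

lemma algebraic_poly_at_critical_point:
  fixes P :: "'a::field_char_0 poly"
  assumes alg: "\<And>i. algebraic (coeff P i)" and crit: "poly (pderiv P) z = 0"
  shows "algebraic (poly P z)"
proof (rule ccontr)
  assume "\<not> algebraic (poly P z)"
  then obtain F D where "derivation F D" "poly P z \<in> F" "insert z (set (coeffs P)) \<subseteq> F"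
    and D_value: "D (poly P z) = 1"
    using ex_derivation_transcendental by blast
  then interpret derivation F D
    by simp
  have "z \<in> F" "poly_over F P"
    using \<open>insert z (set (coeffs P)) \<subseteq> F\<close> poly_over_coeffs by auto
  moreover have "map_poly D P = 0"
    using \<open>poly_over F P\<close> alg by (intro poly_eqI) (simp add: coeff_map_poly poly_over_def D_algebraic)
  ultimately have "D (poly P z) = 0"
    using D_poly crit by simp
  with D_value show False
    by simp
qed

lemma algebraic_coeff_if_critical_values_algebraic:
  fixes P :: "complex poly"
  assumes deg: "degree P > 0" and norm: "normalized_poly P"
    and alg: "\<forall>w\<in>critical_values P. algebraic w"
  shows "algebraic (coeff P i)"
proof (rule ccontr)
  assume "\<not> algebraic (coeff P i)"
  define B where "B = critical_values P"
  have "finite B"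
    using deg by (simp add: B_def finite_critical_values pderiv_eq_0_iff)
  have crit: "\<And>z. poly (pderiv P) z = 0 \<Longrightarrow> poly P z \<in> B"
    by (auto simp: B_def critical_values_def)
  obtain H where H: "pcompose (vanishing_poly B) P = pderiv P * H"
    using pderiv_dvd_pcompose_vanishing_poly[OF \<open>finite B\<close> deg crit] by (rule dvdE)
  obtain F D where "derivation F D" and F: "set (coeffs P) \<union> B \<union> set (coeffs H) \<subseteq> F"
    and D_value: "D (coeff P i) = 1"
    using ex_derivation_transcendental[OF \<open>\<not> algebraic (coeff P i)\<close>] \<open>finite B\<close>
    by (metis finite_Un finite_set)
  interpret derivation F D
    by fact
  define Q where "Q = map_poly D P"
  have "B \<subseteq> F" "poly_over F P" "poly_over F H"
    using F poly_over_coeffs by auto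
  moreover have "\<And>w. w \<in> B \<Longrightarrow> D w = 0"
    using \<open>B \<subseteq> F\<close> alg D_algebraic by (auto simp: B_def)
  ultimately have "pcompose (pderiv (vanishing_poly B)) P * Q = pderiv Q * H + pderiv P * map_poly D H"
    unfolding Q_def using H
    by (intro map_D_deformation poly_over_vanishing_poly map_D_vanishing_poly)
  then have "pderiv P dvd Q"
    using pderiv_dvd_deformation[OF \<open>finite B\<close> deg crit H] by blast
  moreover have "coeff Q j = 0" if "degree P - 1 \<le> j" for j
    using norm that unfolding Q_def normalized_poly_def by (intro coeff_map_D_high_eq_0) auto
  ultimately have "Q = 0"
    using dvd_imp_degree_le[of "pderiv P" Q] degree_lessI[of Q "degree P - 1"]
    by (force simp: degree_pderiv)
  then have "coeff Q i = 0"
    by simp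
  with D_value show False
    by (simp add: Q_def coeff_map_poly)
qed

theorem mainTheorem1:
  fixes P :: "complex poly" and n :: nat
  assumes "n \<ge> 1" and "degree P = n" and "normalized_poly P"
  shows "(\<forall>i. algebraic (coeff P i)) \<longleftrightarrow> (\<forall>w \<in> critical_values P. algebraic w)"
proof
  assume "\<forall>i. algebraic (coeff P i)"
  then show "\<forall>w \<in> critical_values P. algebraic w"
    by (auto simp: critical_values_def intro: algebraic_poly_at_critical_point)
next
  assume "\<forall>w \<in> critical_values P. algebraic w"
  moreover have "degree P > 0"
    using assms(1,2) by simp
  ultimately show "\<forall>i. algebraic (coeff P i)"
    using assms(3) algebraic_coeff_if_critical_values_algebraic by blast
qed

end
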